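(* Let $m,n\ge1$ and let $A\in\{0,1\}^{m\times n}$ have exactly three ones in each row. Let $x^0,\bar x^0\in\mathrm{NPadj}(A)$ be as defined in the context. Then $x^0$ and $\bar x^0$ are adjacent vertices of $\operatorname{conv}(\mathrm{NPadj}(A))$ if and only if $F_1=\emptyset$, equivalently if and only if $\mathrm{Part}(A)=\emptyset$.
   Context: **Definition of $\mathrm{NPadj}(A)$.** Let $m,n\ge1$ and let $A\in\{0,1\}^{m\times n}$ have exactly three ones in each row. Index the coordinates of $\mathbb{R}^{3n+3}$ by $y_1,y_2,y_3$ and by $x_j,\bar x_j,x'_j$ for $j\in[n]=\{1,\dots,n\}$. Then $\mathrm{NPadj}(A)$ is the set of vectors in $\{0,1\}^{3n+3}$ satisfying: - $x_j+\bar x_j=1$ for all $j\in[n]$; - $y_1+y_2+x'_j+\bar x_j=2$ for all $j\in[n]$; - for each row of $A$, with ones in columns $i<j<k$, the equation $y_3+x_i+x'_j+x'_k=2$. **Special points and sets.** - $x^0$ is the point with $y_1=y_2=y_3=0$, $x_j=0$ and $x'_j=\bar x_j=1$ for all $j\in[n]$. - $\bar x^0=\mathbf 1-x^0$. - $F_1=\{x\in\mathrm{NPadj}(A): y_1=0,y_2=1,y_3=1\}$. - $\mathrm{Part}(A)=\{z\in\{0,1\}^n: Az=\mathbf 1\}$. Two vertices are adjacent if their convex hull is an edge (1-dimensional face) of the polytope. *)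

theory Defs
  imports "HOL-Analysis.Analysis"
begin

text \<open>Coordinates of R^(3n+3): y1,y2,y3 and, for each column j, x_j, xbar_j, x'_j.
  Columns are elements of a finite linearly ordered type 'n (playing the role of [n]).\<close>

datatype 'n coord = Y1 | Y2 | Y3 | X 'n | XB 'n | XP 'n

lemma UNIV_coord: "(UNIV :: 'n coord set) = {Y1, Y2, Y3} \<union> range X \<union> range XB \<union> range XP"
  apply (rule set_eqI)
  subgoal for c by (cases c) auto
  done

instance coord :: (finite) finite
  by standard (simp add: UNIV_coord)

definition three_ones :: "('m::finite \<Rightarrow> 'n::finite \<Rightarrow> int) \<Rightarrow> bool" where
  "three_ones A \<longleftrightarrow> (\<forall>i j. A i j \<in> {0, 1}) \<and> (\<forall>i. card {j. A i j = 1} = 3)"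

definition NPadj :: "('m::finite \<Rightarrow> 'n::{finite,linorder} \<Rightarrow> int) \<Rightarrow> (real ^ 'n coord) set" where
  "NPadj A = {x. (\<forall>c. x $ c \<in> {0, 1})
      \<and> (\<forall>j. x $ X j + x $ XB j = 1)
      \<and> (\<forall>j. x $ Y1 + x $ Y2 + x $ XP j + x $ XB j = 2)
      \<and> (\<forall>r a b c. a < b \<and> b < c \<and> A r a = 1 \<and> A r b = 1 \<and> A r c = 1 \<longrightarrow>
            x $ Y3 + x $ X a + x $ XP b + x $ XP c = 2)}"

definition x0 :: "real ^ ('n::finite coord)" where
  "x0 = (\<chi> c. case c of Y1 \<Rightarrow> 0 | Y2 \<Rightarrow> 0 | Y3 \<Rightarrow> 0 | X j \<Rightarrow> 0 | XB j \<Rightarrow> 1 | XP j \<Rightarrow> 1)"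

definition x0bar :: "real ^ ('n::finite coord)" where
  "x0bar = 1 - x0"

definition F1 :: "('m::finite \<Rightarrow> 'n::{finite,linorder} \<Rightarrow> int) \<Rightarrow> (real ^ 'n coord) set" where
  "F1 A = {x \<in> NPadj A. x $ Y1 = 0 \<and> x $ Y2 = 1 \<and> x $ Y3 = 1}"

definition Part :: "('m::finite \<Rightarrow> 'n::finite \<Rightarrow> int) \<Rightarrow> ('n \<Rightarrow> int) set" where
  "Part A = {z. (\<forall>j. z j \<in> {0, 1}) \<and> (\<forall>i. (\<Sum>j\<in>UNIV. A i j * z j) = 1)}"

definition adjacent_vertices :: "'a::euclidean_space set \<Rightarrow> 'a \<Rightarrow> 'a \<Rightarrow> bool" where
  "adjacent_vertices P u v \<longleftrightarrow> {u} face_of P \<and> {v} face_of P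
     \<and> convex hull {u, v} face_of P \<and> aff_dim (convex hull {u, v}) = 1"

end

theory Submission
  imports Defs
begin

text \<open>Points with \<open>y\<^sub>1 + y\<^sub>2 = 1\<close> encode partitions: for them \<open>x'\<^sub>j = x\<^sub>j\<close>, each row equation reads
  \<open>y\<^sub>3 + x\<^sub>a + x\<^sub>b + x\<^sub>c = 2\<close>, so exactly one of \<open>x\<^sub>a, x\<^sub>b, x\<^sub>c\<close> equals \<open>y\<^sub>3\<close> and the columns with
  \<open>x\<^sub>j = y\<^sub>3\<close> form a partition; conversely a partition \<open>z\<close> gives the point \<open>(0, 1, 1, z, 1 - z, z)\<close>
  of \<open>F\<^sub>1\<close>. Without partitions every point has \<open>y\<^sub>1 = y\<^sub>2\<close> and is then forced to be \<open>x\<^sup>0\<close> or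
  \<open>1 - x\<^sup>0\<close>, so the polytope is that segment. Since \<open>NPadj(A)\<close> is closed under \<open>x \<mapsto> 1 - x\<close>,
  a point \<open>z \<in> F\<^sub>1\<close> and \<open>1 - z\<close> have the same midpoint as \<open>x\<^sup>0\<close> and \<open>1 - x\<^sup>0\<close>; as \<open>z\<close> is
  not on the segment \<open>[x\<^sup>0, 1 - x\<^sup>0]\<close> (where \<open>y\<^sub>1 = y\<^sub>2\<close>), the segment is not a face.\<close>

lemma card_3_sorted:
  fixes S :: "'a::linorder set"
  assumes "card S = 3"
  obtains a b c where "a < b" "b < c" "S = {a, b, c}"
proof -
  have "finite S" using assms by (intro card_ge_0_finite) simp
  then obtain l where l: "sorted_wrt (<) l" "set l = S" "length l = 3"
    using finite_set_strict_sorted[of S] assms by auto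
  then obtain a b c where "l = [a, b, c]"
    by (auto simp: numeral_3_eq_3 length_Suc_conv)
  with l show ?thesis by (intro that[of a b c]) auto
qed

lemma three_ones_entry: "three_ones A \<Longrightarrow> A r j \<in> {0, 1}"
  unfolding three_ones_def by blast

lemma three_ones_row:
  assumes "three_ones (A :: 'm::finite \<Rightarrow> 'n::{finite,linorder} \<Rightarrow> int)"
  obtains a b c where "a < b" "b < c" "{j. A r j = 1} = {a, b, c}"
proof -
  have "card {j. A r j = 1} = 3" using assms unfolding three_ones_def by blast
  then show thesis by (rule card_3_sorted) (rule that)
qed

lemma three_ones_row_sum:
  fixes A :: "'m::finite \<Rightarrow> 'n::{finite,linorder} \<Rightarrow> int"
  assumes A: "three_ones A" and abc: "a < b" "b < c" "A r a = 1" "A r b = 1" "A r c = 1"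
  shows "(\<Sum>j\<in>UNIV. A r j * f j) = f a + f b + f c"
proof -
  let ?S = "{j. A r j = 1}"
  have "a < c" using abc by order
  then have "card {a, b, c} = 3" using abc by (auto simp: card_insert_if)
  moreover have "card ?S = 3" using A unfolding three_ones_def by blast
  moreover have "{a, b, c} \<subseteq> ?S" using abc by auto
  ultimately have S: "?S = {a, b, c}" by (metis card_subset_eq finite)
  have "(\<Sum>j\<in>UNIV. A r j * f j) = (\<Sum>j\<in>UNIV. if j \<in> ?S then f j else 0)"
    using three_ones_entry[OF A] by (intro sum.cong) auto
  also have "\<dots> = (\<Sum>j\<in>?S. f j)" by (simp add: sum.If_cases)
  also have "\<dots> = f a + f b + f c" using S abc \<open>a < c\<close> by (simp add: add.assoc less_imp_neq)
  finally show ?thesis .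
qed

lemma mem_Part_iff:
  fixes A :: "'m::finite \<Rightarrow> 'n::{finite,linorder} \<Rightarrow> int"
  assumes A: "three_ones A"
  shows "z \<in> Part A \<longleftrightarrow> (\<forall>j. z j \<in> {0, 1})
    \<and> (\<forall>r a b c. a < b \<and> b < c \<and> A r a = 1 \<and> A r b = 1 \<and> A r c = 1 \<longrightarrow> z a + z b + z c = 1)"
    (is "_ \<longleftrightarrow> _ \<and> ?rows")
proof -
  have "(\<forall>r. (\<Sum>j\<in>UNIV. A r j * z j) = 1) \<longleftrightarrow> ?rows"
  proof
    assume sums: "\<forall>r. (\<Sum>j\<in>UNIV. A r j * z j) = 1"
    show ?rows
    proof (intro allI impI, elim conjE)
      fix r a b c
      assume "a < b" "b < c" "A r a = 1" "A r b = 1" "A r c = 1"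
      from three_ones_row_sum[OF A this, of z] sums show "z a + z b + z c = 1" by simp
    qed
  next
    assume rows: ?rows
    show "\<forall>r. (\<Sum>j\<in>UNIV. A r j * z j) = 1"
    proof
      fix r
      obtain a b c where "a < b" "b < c" "{j. A r j = 1} = {a, b, c}"
        using three_ones_row[OF A] .
      then have abc: "a < b" "b < c" "A r a = 1" "A r b = 1" "A r c = 1" by auto
      then show "(\<Sum>j\<in>UNIV. A r j * z j) = 1"
        using rows by (simp add: three_ones_row_sum[OF A abc])
    qed
  qed
  then show ?thesis unfolding Part_def by blast
qed

lemma x0_components [simp]:
  "(x0 :: real ^ 'n::finite coord) $ Y1 = 0" "(x0 :: real ^ 'n coord) $ Y2 = 0"
  "(x0bar :: real ^ 'n coord) $ Y1 = 1" "(x0bar :: real ^ 'n coord) $ Y2 = 1"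
  unfolding x0bar_def x0_def by auto

lemma x0_neq_x0bar: "(x0 :: real ^ 'n::finite coord) \<noteq> x0bar"
  using x0_components(1,3) by (metis zero_neq_one)

lemma NPadj_XP_eq_X:
  assumes "x \<in> NPadj A" "x $ Y1 + x $ Y2 = 1"
  shows "x $ XP j = x $ X j"
proof -
  have "x $ X j + x $ XB j = 1" "x $ Y1 + x $ Y2 + x $ XP j + x $ XB j = 2"
    using assms(1) unfolding NPadj_def by auto
  with assms(2) show ?thesis by linarith
qed

lemma Part_of_NPadj:
  fixes A :: "'m::finite \<Rightarrow> 'n::{finite,linorder} \<Rightarrow> int"
  assumes A: "three_ones A" and x: "x \<in> NPadj A" and y: "x $ Y1 + x $ Y2 = 1"
  shows "(\<lambda>j. if x $ X j = x $ Y3 then 1 else 0) \<in> Part A"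
  unfolding mem_Part_iff[OF A]
proof (intro conjI allI impI)
  fix r a b c
  assume "a < b \<and> b < c \<and> A r a = 1 \<and> A r b = 1 \<and> A r c = 1"
  then have "x $ Y3 + x $ X a + x $ XP b + x $ XP c = 2"
    using x unfolding NPadj_def by blast
  then have "x $ Y3 + x $ X a + x $ X b + x $ X c = 2" by (simp add: NPadj_XP_eq_X[OF x y])
  moreover have "x $ Y3 \<in> {0, 1}" "x $ X a \<in> {0, 1}" "x $ X b \<in> {0, 1}" "x $ X c \<in> {0, 1}"
    using x unfolding NPadj_def by blast+
  ultimately show "(if x $ X a = x $ Y3 then 1 else 0) + (if x $ X b = x $ Y3 then 1 else 0)
      + (if x $ X c = x $ Y3 then 1 else 0) = (1::int)"
    by auto
qed simp

lemma F1_point_of_Part: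
  fixes A :: "'m::finite \<Rightarrow> 'n::{finite,linorder} \<Rightarrow> int"
  assumes A: "three_ones A" and z: "z \<in> Part A"
  shows "(\<chi> c. case c of Y1 \<Rightarrow> 0 | Y2 \<Rightarrow> 1 | Y3 \<Rightarrow> 1 | X j \<Rightarrow> of_int (z j)
      | XB j \<Rightarrow> 1 - of_int (z j) | XP j \<Rightarrow> of_int (z j)) \<in> F1 A"
    (is "?p \<in> _")
proof -
  have binary: "z j \<in> {0, 1}" for j using z unfolding mem_Part_iff[OF A] by blast
  have "?p \<in> NPadj A"
    unfolding NPadj_def
  proof (intro CollectI conjI allI impI)
    fix d show "?p $ d \<in> {0, 1}" using binary by (cases d) auto
  next
    fix r a b c
    assume "a < b \<and> b < c \<and> A r a = 1 \<and> A r b = 1 \<and> A r c = 1"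
    then have "z a + z b + z c = 1" using z unfolding mem_Part_iff[OF A] by blast
    then have "real_of_int (z a) + of_int (z b) + of_int (z c) = 1" by (metis of_int_add of_int_1)
    then show "?p $ Y3 + ?p $ X a + ?p $ XP b + ?p $ XP c = 2" by simp
  qed simp_all
  then show ?thesis unfolding F1_def by simp
qed

lemma F1_empty_iff_Part_empty:
  fixes A :: "'m::finite \<Rightarrow> 'n::{finite,linorder} \<Rightarrow> int"
  assumes A: "three_ones A"
  shows "F1 A = {} \<longleftrightarrow> Part A = {}"
proof
  assume "F1 A = {}"
  then show "Part A = {}" using F1_point_of_Part[OF A] by blast
next
  assume "Part A = {}"
  then show "F1 A = {}" using Part_of_NPadj[OF A] unfolding F1_def by fastforce
qed

lemma NPadj_complement:
  assumes "x \<in> NPadj A"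
  shows "1 - x \<in> NPadj A"
  using assms unfolding NPadj_def by (auto simp: algebra_simps)

lemma x0_mem_NPadj: "x0 \<in> NPadj A"
  unfolding NPadj_def x0_def by (auto split: coord.split)

lemma NPadj_eq_x0:
  fixes A :: "'m::finite \<Rightarrow> 'n::{finite,linorder} \<Rightarrow> int"
  assumes A: "three_ones A" and x: "x \<in> NPadj A" and y: "x $ Y1 = 0" "x $ Y2 = 0"
  shows "x = x0"
proof -
  have binary: "x $ d \<in> {0, 1}" for d using x unfolding NPadj_def by blast
  have cols: "x $ X j = 0 \<and> x $ XB j = 1 \<and> x $ XP j = 1" for j
  proof -
    have "x $ X j + x $ XB j = 1" "x $ XP j + x $ XB j = 2"
      using x y unfolding NPadj_def by auto
    then show ?thesis using binary[of "XB j"] binary[of "XP j"] by auto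
  qed
  fix r :: 'm \<comment> \<open>any row determines \<open>y\<^sub>3\<close>; one exists as types are nonempty\<close>
  obtain a b c where "a < b" "b < c" "{j. A r j = 1} = {a, b, c}"
    using three_ones_row[OF A] .
  then have "x $ Y3 + x $ X a + x $ XP b + x $ XP c = 2"
    using x unfolding NPadj_def by blast
  then have "x $ Y3 = 0" using cols by simp
  then show ?thesis
    unfolding vec_eq_iff by (auto simp: x0_def y cols split: coord.split)
qed

lemma NPadj_eq_pair:
  fixes A :: "'m::finite \<Rightarrow> 'n::{finite,linorder} \<Rightarrow> int"
  assumes A: "three_ones A" and "Part A = {}"
  shows "NPadj A = {x0, x0bar}"
proof
  show "NPadj A \<subseteq> {x0, x0bar}"
  proof
    fix x assume x: "x \<in> NPadj A"
    have "x $ Y1 + x $ Y2 \<noteq> 1" using Part_of_NPadj[OF A x] \<open>Part A = {}\<close> by blast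
    moreover have "x $ Y1 \<in> {0, 1}" "x $ Y2 \<in> {0, 1}" using x unfolding NPadj_def by blast+
    ultimately consider "x $ Y1 = 0" "x $ Y2 = 0" | "(1 - x) $ Y1 = 0" "(1 - x) $ Y2 = 0" by force
    then show "x \<in> {x0, x0bar}"
    proof cases
      case 1 then show ?thesis using NPadj_eq_x0[OF A x] by simp
    next
      case 2
      then have "1 - x = x0" using NPadj_eq_x0[OF A NPadj_complement[OF x]] by simp
      then have "x = x0bar" unfolding x0bar_def by (simp add: algebra_simps)
      then show ?thesis by simp
    qed
  qed
  show "{x0, x0bar} \<subseteq> NPadj A"
    using x0_mem_NPadj NPadj_complement[OF x0_mem_NPadj] unfolding x0bar_def by blast
qed

lemma adjacent_vertices_convex_hull_pair:
  fixes u v :: "'a::euclidean_space"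
  assumes "u \<noteq> v"
  shows "adjacent_vertices (convex hull {u, v}) u v"
  unfolding adjacent_vertices_def face_of_singleton extreme_point_of_convex_hull_2
  using assms by (simp add: face_of_refl aff_dim_convex_hull)

lemma face_of_convex_hull_pair_midpoint:
  fixes u v :: "'a::euclidean_space"
  assumes "convex hull {u, v} face_of S" "p \<in> S" "q \<in> S" "p \<noteq> q" "midpoint p q = midpoint u v"
  shows "p \<in> closed_segment u v"
proof -
  have "midpoint p q \<in> convex hull {u, v}"
    unfolding assms(5) segment_convex_hull[symmetric] by (rule midpoint_in_closed_segment)
  moreover have "midpoint p q \<in> open_segment p q" using assms(4) by simp
  ultimately have "p \<in> convex hull {u, v}" using face_ofD[OF assms(1) _ assms(2,3)] by blast
  then show ?thesis by (simp add: segment_convex_hull)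
qed

lemma convex_hull_x0_not_face:
  fixes A :: "'m::finite \<Rightarrow> 'n::{finite,linorder} \<Rightarrow> int"
  assumes z: "z \<in> F1 A"
  shows "\<not> convex hull {x0 :: real ^ 'n coord, x0bar} face_of convex hull (NPadj A)"
proof
  assume face: "convex hull {x0 :: real ^ 'n coord, x0bar} face_of convex hull (NPadj A)"
  have zN: "z \<in> NPadj A" and zY: "z $ Y1 = 0" "z $ Y2 = 1" using z unfolding F1_def by auto
  have "z \<noteq> 1 - z" using zY by (metis diff_zero one_index vector_minus_component zero_neq_one)
  moreover have "midpoint z (1 - z) = midpoint x0 x0bar"
    unfolding midpoint_def x0bar_def by simp
  moreover have "z \<in> convex hull (NPadj A)" "1 - z \<in> convex hull (NPadj A)"
    using zN NPadj_complement[OF zN] by (auto intro: hull_inc)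
  ultimately have "z \<in> closed_segment x0 x0bar"
    using face_of_convex_hull_pair_midpoint[OF face] by blast
  then obtain u where "z = (1 - u) *\<^sub>R x0 + u *\<^sub>R x0bar"
    unfolding closed_segment_def by blast
  then have "z $ Y1 = z $ Y2" by simp
  with zY show False by simp
qed

theorem mainTheorem5:
  fixes A :: "'m::finite \<Rightarrow> 'n::{finite,linorder} \<Rightarrow> int"
  assumes "three_ones A"
  shows "(adjacent_vertices (convex hull (NPadj A)) (x0 :: real ^ 'n coord) x0bar \<longleftrightarrow> F1 A = {})
       \<and> (F1 A = {} \<longleftrightarrow> Part A = {})"
proof
  show F1_Part: "F1 A = {} \<longleftrightarrow> Part A = {}" by (rule F1_empty_iff_Part_empty[OF assms])
  show "adjacent_vertices (convex hull (NPadj A)) (x0 :: real ^ 'n coord) x0bar \<longleftrightarrow> F1 A = {}"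
  proof
    assume "adjacent_vertices (convex hull (NPadj A)) (x0 :: real ^ 'n coord) x0bar"
    then show "F1 A = {}"
      unfolding adjacent_vertices_def using convex_hull_x0_not_face by blast
  next
    assume "F1 A = {}"
    then have "NPadj A = {x0, x0bar}" using NPadj_eq_pair[OF assms] F1_Part by blast
    then show "adjacent_vertices (convex hull (NPadj A)) (x0 :: real ^ 'n coord) x0bar"
      using adjacent_vertices_convex_hull_pair[OF x0_neq_x0bar] by simp
  qed
qed

end
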